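(* Let $A$ be a non-deterministic timed automaton and let $\widetilde{A}$ be its discretized timed automaton. Then $$d(\mathfrak{L}(A),\mathfrak{L}(\widetilde{A}))\le \tfrac12,$$ where for timed languages $d(\mathfrak{L}_1,\mathfrak{L}_2)=\max\{c(\mathfrak{L}_1,\mathfrak{L}_2),c(\mathfrak{L}_2,\mathfrak{L}_1)\}$.
   Context: **Timed automata.** A non-deterministic timed automaton is a tuple $A=(\mathcal{Q},q_0,\mathcal{F},\Sigma,\mathcal{C},\mathcal{T})$ with: - a finite set $\mathcal{Q}$ of locations, an initial location $q_0$, and accepting locations $\mathcal{F}$; - a finite action set $\Sigma$ and a finite clock set $\mathcal{C}$; - transitions $(q,a,g,\mathcal{C}_{rst},q')$, where the guard $g$ is a conjunction of constraints $c\sim n$ with $\sim\in\{<,\le,=,\ge,>\}$, and $\mathcal{C}_{rst}$ is the set of clocks that are reset. Guard constants are normally in $\mathbb{N}_0$; constants in $\frac12\mathbb{N}_0$ are also allowed, with the same semantics. Runs start in $(q_0,\mathbf{0})$ and alternate delays $(q,v)\xrightarrow{d}(q,v+d)$ with jumps $(q,v)\xrightarrow{a}(q',v[\mathcal{C}_{rst}])$. A jump along a transition is allowed only if $v$ satisfies its guard. A run with delays $d_1,\dots,d_k$ and actions $a_1,\dots,a_k$ induces the timed trace $(t_1,a_1),\dots,(t_k,a_k)$ with $t_i=\sum_{j\le i}d_j$. The language $\mathfrak{L}(A)$ consists of the timed traces of runs ending in an accepting location. **Distances.** $d(\tau_1,\tau_2)=\infty$ if the two traces differ in length or in some action. Otherwise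 $d(\tau_1,\tau_2)=\max_i|t^{1}_i-t^{2}_i|$. The conformance distance is $c(\mathfrak{L}_1,\mathfrak{L}_2)=\sup_{\tau_1\in\mathfrak{L}_1}\inf_{\tau_2\in\mathfrak{L}_2}d(\tau_1,\tau_2)$. **Augmented region automaton $\mathfrak{R}^t(A)$.** - Let $A$ have clocks $x_1,\dots,x_s$ and let $M$ be the largest constant in its guards. Add a clock $t=x_0$ that measures absolute time: it is never reset and does not occur in guards. - A region is a pair $(\mathbf n,\Delta)$, where $\mathbf n\in\{0,1,\dots,M,\top\}^s$ gives the integral parts of $x_1,\dots,x_s$ ($\top$ means the value exceeds $M$). $\Delta$ is an ordering $0\preceq_0\{x_{i_0}\}\preceq_1\cdots\preceq_s\{x_{i_s}\}<1$ of the fractional parts of $x_0,\dots,x_s$, with each $\preceq_j\in\{=,<\}$. The integral part of $t$ is not recorded; only whether $\{t\}=0$ and its order relative to the other fractional parts. - Vertices are pairs $(q,r)$ with $q$ a location and $r$ a region. The initial vertex is $(q_0,\mathbf 0,\mathbf 0)$. - There is an edge $(q,r)\xrightarrow{a}(q',r')$ of weight $m\in\mathbb{N}_0$ iff some run of $A$ (extended by $t$) contains $(q,v)\xrightarrow{d}(q,v+d)\xrightarrow{a}(q',v')$ with $v\in r$, $v'\in r'$ and $m=\lfloor v'(t)\rfloor-\lfloor v(t)\rfloor$. - Parallel edges with different weights may exist. An infinite set of consecutive weights $m,m+1,m+2,\dots$ between the same two vertices is represented by one edge of weight $m^*$. **Discretized timed automaton $\widetilde{A}$.** - It has the same vertices,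 initial vertex, edges and action labels as $\mathfrak{R}^t(A)$. A vertex $(q,r)$ is accepting iff $q\in\mathcal{F}$. - It has a single clock $t$, reset on every transition. - For an edge $e$ whose source region has fractional part of $t$ equal to $\{t_0\}$ and whose target region has $\{t_1\}$, let $\delta=\frac12(\lceil\{t_1\}\rceil-\lceil\{t_0\}\rceil)\in\{-\frac12,0,\frac12\}$. - The guard of $e$ is $t=w(e)+\delta$ if its weight is $w(e)=m$, and $t\ge m+\delta$ if its weight is $m^*$. *)

theory Defs
  imports Complex_Main "HOL-Library.Extended_Real"
begin

datatype cmp = Lt | Le | Eq | Ge | Gt

type_synonym 'c guard = "('c \<times> cmp \<times> real) list"

record ('q, 'a, 'c) ta =
  locs  :: "'q set"
  init  :: "'q"
  acc   :: "'q set"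
  acts  :: "'a set"
  clks  :: "'c set"
  trans :: "('q \<times> 'a \<times> 'c guard \<times> 'c set \<times> 'q) set"

fun cmp_sem :: "cmp \<Rightarrow> real \<Rightarrow> real \<Rightarrow> bool" where
  "cmp_sem Lt x n = (x < n)"
| "cmp_sem Le x n = (x \<le> n)"
| "cmp_sem Eq x n = (x = n)"
| "cmp_sem Ge x n = (x \<ge> n)"
| "cmp_sem Gt x n = (x > n)"

definition sat :: "'c guard \<Rightarrow> ('c \<Rightarrow> real) \<Rightarrow> bool" where
  "sat g v \<longleftrightarrow> (\<forall>(c, op, n) \<in> set g. cmp_sem op (v c) n)"

definition shift :: "('c \<Rightarrow> real) \<Rightarrow> real \<Rightarrow> ('c \<Rightarrow> real)" where
  "shift v d = (\<lambda>c. v c + d)"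

definition reset :: "'c set \<Rightarrow> ('c \<Rightarrow> real) \<Rightarrow> ('c \<Rightarrow> real)" where
  "reset R v = (\<lambda>c. if c \<in> R then 0 else v c)"

definition wf_ta :: "('q, 'a, 'c) ta \<Rightarrow> bool" where
  "wf_ta A \<longleftrightarrow> finite (locs A) \<and> init A \<in> locs A \<and> acc A \<subseteq> locs A \<and>
     finite (acts A) \<and> finite (clks A) \<and> finite (trans A) \<and>
     (\<forall>(q, a, g, R, q') \<in> trans A. q \<in> locs A \<and> q' \<in> locs A \<and> a \<in> acts A \<and>
        R \<subseteq> clks A \<and> (\<forall>(c, op, n) \<in> set g. c \<in> clks A \<and> n \<in> \<nat>))"

text \<open>A run fragment: from location q with valuation v at absolute time T, producing the
  timed trace tr (with absolute time stamps), ending in location q' with valuation v' at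
  absolute time T'.\<close>
inductive ta_run :: "('q, 'a, 'c) ta \<Rightarrow> 'q \<Rightarrow> ('c \<Rightarrow> real) \<Rightarrow> real
    \<Rightarrow> (real \<times> 'a) list \<Rightarrow> 'q \<Rightarrow> ('c \<Rightarrow> real) \<Rightarrow> real \<Rightarrow> bool"
  for A where
  run_nil: "ta_run A q v T [] q v T"
| run_step: "\<lbrakk> d \<ge> 0; (q, a, g, R, q1) \<in> trans A; sat g (shift v d);
     ta_run A q1 (reset R (shift v d)) (T + d) tr q' v' T' \<rbrakk>
   \<Longrightarrow> ta_run A q v T ((T + d, a) # tr) q' v' T'"

definition lang :: "('q, 'a, 'c) ta \<Rightarrow> (real \<times> 'a) list set" where
  "lang A = {tr. \<exists>q' v' T'. ta_run A (init A) (\<lambda>_. 0) 0 tr q' v' T' \<and> q' \<in> acc A}"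

definition trace_dist :: "(real \<times> 'a) list \<Rightarrow> (real \<times> 'a) list \<Rightarrow> ereal" where
  "trace_dist t1 t2 =
     (if map snd t1 = map snd t2
      then ereal (Max (insert 0 {\<bar>fst (t1 ! i) - fst (t2 ! i)\<bar> | i. i < length t1}))
      else \<infinity>)"

definition conf_dist :: "(real \<times> 'a) list set \<Rightarrow> (real \<times> 'a) list set \<Rightarrow> ereal" where
  "conf_dist L1 L2 = (SUP t1\<in>L1. INF t2\<in>L2. trace_dist t1 t2)"

definition lang_dist :: "(real \<times> 'a) list set \<Rightarrow> (real \<times> 'a) list set \<Rightarrow> ereal" where
  "lang_dist L1 L2 = max (conf_dist L1 L2) (conf_dist L2 L1)"

text \<open>Extended valuations: clock None is the absolute-time clock t.\<close>
definition ext :: "('c \<Rightarrow> real) \<Rightarrow> real \<Rightarrow> ('c option \<Rightarrow> real)" where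
  "ext v T = (\<lambda>x. case x of None \<Rightarrow> T | Some c \<Rightarrow> v c)"

definition max_const :: "('q, 'a, 'c) ta \<Rightarrow> real" where
  "max_const A = Max (insert 0 {n. \<exists>(q, a, g, R, q') \<in> trans A. \<exists>c op. (c, op, n) \<in> set g})"

definition region_equiv :: "('q, 'a, 'c) ta \<Rightarrow> ('c option \<Rightarrow> real) \<Rightarrow> ('c option \<Rightarrow> real) \<Rightarrow> bool" where
  "region_equiv A u w \<longleftrightarrow>
     (\<forall>c \<in> clks A. (u (Some c) > max_const A \<longleftrightarrow> w (Some c) > max_const A) \<and>
        (u (Some c) \<le> max_const A \<longrightarrow> \<lfloor>u (Some c)\<rfloor> = \<lfloor>w (Some c)\<rfloor>)) \<and>
     (\<forall>x \<in> insert None (Some ` clks A). (frac (u x) = 0 \<longleftrightarrow> frac (w x) = 0)) \<and>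
     (\<forall>x \<in> insert None (Some ` clks A). \<forall>y \<in> insert None (Some ` clks A).
        (frac (u x) \<le> frac (u y) \<longleftrightarrow> frac (w x) \<le> frac (w y)))"

definition region_of :: "('q, 'a, 'c) ta \<Rightarrow> ('c option \<Rightarrow> real) \<Rightarrow> ('c option \<Rightarrow> real) set" where
  "region_of A u = {w. region_equiv A u w}"

definition regions :: "('q, 'a, 'c) ta \<Rightarrow> ('c option \<Rightarrow> real) set set" where
  "regions A = range (region_of A)"

definition edge_weights :: "('q, 'a, 'c) ta \<Rightarrow> 'q \<Rightarrow> ('c option \<Rightarrow> real) set \<Rightarrow> 'a
    \<Rightarrow> 'q \<Rightarrow> ('c option \<Rightarrow> real) set \<Rightarrow> nat set" where
  "edge_weights A q r a q' r' =
     {m. \<exists>tr v T d g R. ta_run A (init A) (\<lambda>_. 0) 0 tr q v T \<and> ext v T \<in> r \<and>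
        d \<ge> 0 \<and> (q, a, g, R, q') \<in> trans A \<and> sat g (shift v d) \<and>
        ext (reset R (shift v d)) (T + d) \<in> r' \<and>
        int m = \<lfloor>T + d\<rfloor> - \<lfloor>T\<rfloor>}"

text \<open>An infinite set of consecutive weights m, m+1, ... is represented by one edge of weight
  m*; we take the maximal such tail, i.e. the least such m.\<close>
definition has_tail :: "nat set \<Rightarrow> bool" where
  "has_tail W \<longleftrightarrow> (\<exists>m. \<forall>k\<ge>m. k \<in> W)"

definition tail_start :: "nat set \<Rightarrow> nat" where
  "tail_start W = (LEAST m. \<forall>k\<ge>m. k \<in> W)"

text \<open>ceil of the fractional part of t in a region (0 or 1), which is determined by the region.\<close>
definition frac_flag :: "('c option \<Rightarrow> real) set \<Rightarrow> real" where
  "frac_flag r = (if \<exists>u \<in> r. frac (u None) \<noteq> 0 then 1 else 0)"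

definition shift_delta :: "('c option \<Rightarrow> real) set \<Rightarrow> ('c option \<Rightarrow> real) set \<Rightarrow> real" where
  "shift_delta r r' = (frac_flag r' - frac_flag r) / 2"

definition discretize :: "('q, 'a, 'c) ta \<Rightarrow> ('q \<times> ('c option \<Rightarrow> real) set, 'a, unit) ta" where
  "discretize A = \<lparr>
     locs = locs A \<times> regions A,
     init = (init A, region_of A (\<lambda>_. 0)),
     acc = {(q, r). q \<in> acc A \<and> r \<in> regions A},
     acts = acts A,
     clks = {()},
     trans =
       {((q, r), a, [((), Eq, real m + shift_delta r r')], {()}, (q', r')) | q r a q' r' m.
          q \<in> locs A \<and> q' \<in> locs A \<and> r \<in> regions A \<and> r' \<in> regions A \<and>
          m \<in> edge_weights A q r a q' r' \<and>
          (has_tail (edge_weights A q r a q' r') \<longrightarrow> m < tail_start (edge_weights A q r a q' r'))}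
       \<union>
       {((q, r), a, [((), Ge, real (tail_start (edge_weights A q r a q' r')) + shift_delta r r')],
          {()}, (q', r')) | q r a q' r'.
          q \<in> locs A \<and> q' \<in> locs A \<and> r \<in> regions A \<and> r' \<in> regions A \<and>
          has_tail (edge_weights A q r a q' r')}
   \<rparr>"

end

(*
  Both conformance distances are bounded by simulations along the augmented region
  automaton, whose regions also record the fractional part of the absolute time t.

  A run of A with time stamps t_i is followed by the run of the discretization with time
  stamps floor t_i + ceiling (frac t_i) / 2, each within 1/2 of t_i: the region edge taken
  by A has weight m = floor t_(i+1) - floor t_i, and m plus the correction delta of the edge
  is exactly the difference of consecutive such stamps.

  Conversely, region equivalence is a time-abstract bisimulation that also preserves the
  integral time elapsed during a delay, so every edge of the region automaton can be taken,
  with its weight, from every valuation of its source region. Hence a run of the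
  discretization with time stamps s_i is followed by a run of A whose time stamps t_i keep
  s_i - (floor t_i + ceiling (frac t_i) / 2) in [-1/2, 1/2); on an edge of weight m* the
  weight is chosen by rounding. The t_i themselves may still be almost 1 away from s_i.
  But guards compare differences of time stamps with integers, so replacing every time
  stamp t by floor t + phi (frac t), for phi strictly increasing on [0, 1) with phi 0 = 0,
  again yields a run of A. If D < 1/2 bounds all the deviations above, the choice
  phi f = D + (1/2 - D) f for f > 0 moves each t_i to within 1/2 of s_i.
*)

theory Submission
  imports Defs
begin

lemma ta_run_append:
  "ta_run A q v T tr1 q1 v1 T1 \<Longrightarrow> ta_run A q1 v1 T1 tr2 q2 v2 T2 \<Longrightarrow>
     ta_run A q v T (tr1 @ tr2) q2 v2 T2"
  by (induction rule: ta_run.induct) (auto intro: ta_run.intros)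

lemma ta_run_single:
  "0 \<le> d \<Longrightarrow> (q, a, g, R, q1) \<in> trans A \<Longrightarrow> sat g (shift v d) \<Longrightarrow>
     ta_run A q v T [(T + d, a)] q1 (reset R (shift v d)) (T + d)"
  by (rule ta_run.run_step) (auto intro: ta_run.run_nil)

lemma wf_ta_trans_locs:
  "wf_ta A \<Longrightarrow> (q, a, g, R, q1) \<in> trans A \<Longrightarrow> q \<in> locs A \<and> q1 \<in> locs A"
  unfolding wf_ta_def by fastforce

lemma trace_dist_le_if_list_all2:
  assumes "list_all2 (\<lambda>(s, a) (t, b). a = b \<and> \<bar>s - t\<bar> \<le> c) tr1 tr2" "0 \<le> c"
  shows "trace_dist tr1 tr2 \<le> ereal c"
proof -
  have "map snd tr1 = map snd tr2"
    using assms(1) by (induction rule: list_all2_induct) auto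
  moreover have "\<bar>fst (tr1 ! i) - fst (tr2 ! i)\<bar> \<le> c" if "i < length tr1" for i
    using list_all2_nthD[OF assms(1) that] by (cases "tr1 ! i"; cases "tr2 ! i") auto
  then have "Max (insert 0 {\<bar>fst (tr1 ! i) - fst (tr2 ! i)\<bar> | i. i < length tr1}) \<le> c"
    using assms(2) by (subst Max_le_iff) auto
  ultimately show ?thesis
    unfolding trace_dist_def by simp
qed

lemma conf_dist_le:
  assumes "\<And>tr1. tr1 \<in> L1 \<Longrightarrow> \<exists>tr2\<in>L2. trace_dist tr1 tr2 \<le> c"
  shows "conf_dist L1 L2 \<le> c"
  unfolding conf_dist_def
proof (rule SUP_least)
  fix tr1 assume "tr1 \<in> L1"
  then obtain tr2 where "tr2 \<in> L2" "trace_dist tr1 tr2 \<le> c"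
    using assms by blast
  then show "(INF tr2\<in>L2. trace_dist tr1 tr2) \<le> c"
    by (rule INF_lower2)
qed

section \<open>Region equivalence\<close>

definition region_clocks :: "('q, 'a, 'c) ta \<Rightarrow> 'c option set" where
  "region_clocks A = insert None (Some ` clks A)"

lemma None_in_region_clocks [simp]: "None \<in> region_clocks A"
  unfolding region_clocks_def by simp

lemma Some_in_region_clocks [simp]: "Some c \<in> region_clocks A \<longleftrightarrow> c \<in> clks A"
  unfolding region_clocks_def by auto

lemma finite_region_clocks: "finite (clks A) \<Longrightarrow> finite (region_clocks A)"
  unfolding region_clocks_def by simp

lemma region_equivI:
  assumes "\<And>c. c \<in> clks A \<Longrightarrow> u (Some c) > max_const A \<longleftrightarrow> w (Some c) > max_const A"
    and "\<And>c. c \<in> clks A \<Longrightarrow> u (Some c) \<le> max_const A \<Longrightarrow> \<lfloor>u (Some c)\<rfloor> = \<lfloor>w (Some c)\<rfloor>"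
    and "\<And>x. x \<in> region_clocks A \<Longrightarrow> frac (u x) = 0 \<longleftrightarrow> frac (w x) = 0"
    and "\<And>x y. x \<in> region_clocks A \<Longrightarrow> y \<in> region_clocks A \<Longrightarrow>
           frac (u x) \<le> frac (u y) \<longleftrightarrow> frac (w x) \<le> frac (w y)"
  shows "region_equiv A u w"
  using assms unfolding region_equiv_def region_clocks_def by blast

lemma region_equiv_gt_max_const_iff:
  "region_equiv A u w \<Longrightarrow> c \<in> clks A \<Longrightarrow> u (Some c) > max_const A \<longleftrightarrow> w (Some c) > max_const A"
  unfolding region_equiv_def by blast

lemma region_equiv_floor_eq:
  "region_equiv A u w \<Longrightarrow> c \<in> clks A \<Longrightarrow> u (Some c) \<le> max_const A \<Longrightarrow> \<lfloor>u (Some c)\<rfloor> = \<lfloor>w (Some c)\<rfloor>"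
  unfolding region_equiv_def by blast

lemma region_equiv_frac_eq_0_iff:
  "region_equiv A u w \<Longrightarrow> x \<in> region_clocks A \<Longrightarrow> frac (u x) = 0 \<longleftrightarrow> frac (w x) = 0"
  unfolding region_equiv_def region_clocks_def by blast

lemma region_equiv_frac_le_iff:
  "region_equiv A u w \<Longrightarrow> x \<in> region_clocks A \<Longrightarrow> y \<in> region_clocks A \<Longrightarrow>
     frac (u x) \<le> frac (u y) \<longleftrightarrow> frac (w x) \<le> frac (w y)"
  unfolding region_equiv_def region_clocks_def by blast

lemma region_equiv_refl: "region_equiv A u u"
  by (rule region_equivI) auto

lemma region_equiv_sym:
  assumes "region_equiv A u w"
  shows "region_equiv A w u"
proof (rule region_equivI)
  fix c assume c: "c \<in> clks A"
  show "w (Some c) > max_const A \<longleftrightarrow> u (Some c) > max_const A"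
    using region_equiv_gt_max_const_iff[OF assms c] by blast
  assume "w (Some c) \<le> max_const A"
  then show "\<lfloor>w (Some c)\<rfloor> = \<lfloor>u (Some c)\<rfloor>"
    using region_equiv_gt_max_const_iff[OF assms c] region_equiv_floor_eq[OF assms c] by force
qed (use region_equiv_frac_eq_0_iff[OF assms] region_equiv_frac_le_iff[OF assms] in auto)

lemma region_equiv_trans:
  assumes uw: "region_equiv A u w" and wz: "region_equiv A w z"
  shows "region_equiv A u z"
proof (rule region_equivI)
  fix c assume c: "c \<in> clks A"
  show "u (Some c) > max_const A \<longleftrightarrow> z (Some c) > max_const A"
    using region_equiv_gt_max_const_iff[OF uw c] region_equiv_gt_max_const_iff[OF wz c] by blast
  assume "u (Some c) \<le> max_const A"
  then show "\<lfloor>u (Some c)\<rfloor> = \<lfloor>z (Some c)\<rfloor>"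
    using region_equiv_gt_max_const_iff[OF uw c] region_equiv_floor_eq[OF uw c]
      region_equiv_floor_eq[OF wz c] by force
qed (use region_equiv_frac_eq_0_iff[OF uw] region_equiv_frac_le_iff[OF uw]
       region_equiv_frac_eq_0_iff[OF wz] region_equiv_frac_le_iff[OF wz] in auto)

lemma region_of_in_regions: "region_of A u \<in> regions A"
  unfolding regions_def by (rule rangeI)

lemma mem_region_of_self: "u \<in> region_of A u"
  unfolding region_of_def using region_equiv_refl by simp

lemma region_equiv_if_mem_region:
  assumes "r \<in> regions A" "u \<in> r" "w \<in> r"
  shows "region_equiv A u w"
  using assms region_equiv_sym region_equiv_trans
  unfolding regions_def region_of_def by blast

lemma mem_region_if_region_equiv:
  assumes "r \<in> regions A" "u \<in> r" "region_equiv A u w"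
  shows "w \<in> r"
  using assms region_equiv_trans unfolding regions_def region_of_def by blast

lemma ext_Some [simp]: "ext v T (Some c) = v c"
  and ext_None [simp]: "ext v T None = T"
  unfolding ext_def by simp_all

lemma ext_0: "ext (\<lambda>_. 0) 0 = (\<lambda>_. 0)"
  by (auto simp: ext_def split: option.split)

lemma ext_shift: "ext (shift v d) (T + d) = (\<lambda>x. ext v T x + d)"
  by (auto simp: ext_def shift_def split: option.split)

lemma ext_reset:
  "ext (reset R v) T x = (if \<exists>c. x = Some c \<and> c \<in> R then 0 else ext v T x)"
  unfolding ext_def reset_def by (cases x) auto

lemma ceiling_frac_eq: "\<lceil>frac t\<rceil> = (if frac t = 0 then 0 else 1)" for t :: real
proof (cases "frac t = 0")
  case False
  then show ?thesis
    using frac_lt_1[of t] frac_ge_0[of t] by (simp add: ceiling_eq_iff)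
qed (simp del: frac_eq_0_iff)

lemma frac_flag_eq:
  assumes "r \<in> regions A" "ext v T \<in> r"
  shows "frac_flag r = of_int \<lceil>frac T\<rceil>"
proof -
  have "(\<exists>w\<in>r. frac (w None) \<noteq> 0) \<longleftrightarrow> frac T \<noteq> 0"
    using assms(2) region_equiv_if_mem_region[OF assms(1,2)]
      region_equiv_frac_eq_0_iff[OF _ None_in_region_clocks] by (metis ext_None)
  then show ?thesis
    unfolding frac_flag_def ceiling_frac_eq by auto
qed

definition guard_consts :: "('q, 'a, 'c) ta \<Rightarrow> real set" where
  "guard_consts A = {n. \<exists>(q, a, g, R, q') \<in> trans A. \<exists>c op. (c, op, n) \<in> set g}"

lemma finite_guard_consts:
  assumes "finite (trans A)"
  shows "finite (guard_consts A)"
proof (rule finite_subset)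
  show "guard_consts A \<subseteq> (\<Union>(q, a, g, R, q') \<in> trans A. snd ` snd ` set g)"
    unfolding guard_consts_def by force
qed (use assms in auto)

lemma max_const_eq_Max: "max_const A = Max (insert 0 (guard_consts A))"
  unfolding max_const_def guard_consts_def by simp

lemma wf_ta_guard:
  assumes "wf_ta A" "(q, a, g, R, q') \<in> trans A" "(c, op, n) \<in> set g"
  shows "c \<in> clks A" "n \<in> \<nat>" "n \<le> max_const A"
proof -
  show "c \<in> clks A" "n \<in> \<nat>"
    using assms unfolding wf_ta_def by fastforce+
  have "n \<in> guard_consts A"
    unfolding guard_consts_def using assms(2,3) by blast
  moreover have "finite (guard_consts A)"
    using assms(1) finite_guard_consts unfolding wf_ta_def by blast
  ultimately show "n \<le> max_const A"
    unfolding max_const_eq_Max by simp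
qed

lemma max_const_in_Nats:
  assumes "wf_ta A"
  shows "max_const A \<in> \<nat>"
proof -
  have "max_const A \<in> insert 0 (guard_consts A)"
    unfolding max_const_eq_Max
    using assms finite_guard_consts unfolding wf_ta_def by (intro Max_in) auto
  moreover have "guard_consts A \<subseteq> \<nat>"
    using assms unfolding guard_consts_def wf_ta_def by fastforce
  ultimately show ?thesis by auto
qed

lemma cmp_sem_of_int_cong:
  fixes x y :: real
  assumes "\<lfloor>x\<rfloor> = \<lfloor>y\<rfloor>" "frac x = 0 \<longleftrightarrow> frac y = 0"
  shows "cmp_sem op x (of_int k) \<longleftrightarrow> cmp_sem op y (of_int k)"
proof -
  have eq_of_int: "z = of_int k \<longleftrightarrow> \<lfloor>z\<rfloor> = k \<and> frac z = 0" for z :: real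
    unfolding frac_def by auto
  have "x < of_int k \<longleftrightarrow> y < of_int k"
    using assms(1) by (metis floor_less_iff)
  moreover have "x = of_int k \<longleftrightarrow> y = of_int k"
    unfolding eq_of_int[of x] eq_of_int[of y] using assms by (simp only:)
  ultimately show ?thesis
    by (cases op) auto
qed

lemma sat_region_equiv:
  assumes wf: "wf_ta A" and tr: "(q, a, g, R, q') \<in> trans A"
    and equiv: "region_equiv A (ext v T) (ext w T')" and sat: "sat g v"
  shows "sat g w"
  unfolding sat_def
proof (intro ballI, clarify)
  fix c op n assume cn: "(c, op, n) \<in> set g"
  note c = wf_ta_guard(1)[OF wf tr cn] and n = wf_ta_guard(2,3)[OF wf tr cn]
  have v: "cmp_sem op (v c) n"
    using sat cn unfolding sat_def by auto
  show "cmp_sem op (w c) n"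
  proof (cases "v c > max_const A")
    case True
    then have "w c > max_const A"
      using region_equiv_gt_max_const_iff[OF equiv c] by simp
    then show ?thesis
      using True v n(2) by (cases op) auto
  next
    case False
    then have "\<lfloor>v c\<rfloor> = \<lfloor>w c\<rfloor>"
      using region_equiv_floor_eq[OF equiv c] by simp
    moreover have "frac (v c) = 0 \<longleftrightarrow> frac (w c) = 0"
      using region_equiv_frac_eq_0_iff[OF equiv, of "Some c"] c by simp
    moreover obtain k :: nat where "n = of_int (int k)"
      using n(1) by (auto elim: Nats_cases)
    ultimately show ?thesis
      using v cmp_sem_of_int_cong by metis
  qed
qed

lemma region_equiv_reset:
  assumes equiv: "region_equiv A (ext v T) (ext w T')"
  shows "region_equiv A (ext (reset R v) T) (ext (reset R w) T')"
proof (rule region_equivI)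
  fix c assume c: "c \<in> clks A"
  show "ext (reset R v) T (Some c) > max_const A \<longleftrightarrow> ext (reset R w) T' (Some c) > max_const A"
    using region_equiv_gt_max_const_iff[OF equiv c] by (simp add: reset_def)
  show "ext (reset R v) T (Some c) \<le> max_const A \<Longrightarrow>
      \<lfloor>ext (reset R v) T (Some c)\<rfloor> = \<lfloor>ext (reset R w) T' (Some c)\<rfloor>"
    using region_equiv_floor_eq[OF equiv c] by (auto simp: reset_def)
next
  fix x assume "x \<in> region_clocks A"
  then show "frac (ext (reset R v) T x) = 0 \<longleftrightarrow> frac (ext (reset R w) T' x) = 0"
    using region_equiv_frac_eq_0_iff[OF equiv]
    by (cases "\<exists>c. x = Some c \<and> c \<in> R") (auto simp: ext_reset)
next
  fix x y assume x: "x \<in> region_clocks A" and y: "y \<in> region_clocks A"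
  have frac_le_0: "frac z \<le> 0 \<longleftrightarrow> frac z = 0" for z :: real
    using frac_ge_0[of z] by linarith
  have frac_0: "frac (0 :: real) = 0"
    by simp
  show "frac (ext (reset R v) T x) \<le> frac (ext (reset R v) T y) \<longleftrightarrow>
      frac (ext (reset R w) T' x) \<le> frac (ext (reset R w) T' y)"
    using region_equiv_frac_eq_0_iff[OF equiv x] region_equiv_frac_eq_0_iff[OF equiv y]
      region_equiv_frac_le_iff[OF equiv x y]
    by (cases "\<exists>c. x = Some c \<and> c \<in> R"; cases "\<exists>c. y = Some c \<and> c \<in> R")
      (simp_all only: ext_reset if_True if_False frac_le_0 frac_ge_0 frac_0 simp_thms order_refl)
qed

section \<open>Delays\<close>

lemma order_cut_transfer:
  fixes a b :: "'x \<Rightarrow> real"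
  assumes fin: "finite X"
    and le: "\<And>x y. x \<in> X \<Longrightarrow> y \<in> X \<Longrightarrow> a x \<le> a y \<longleftrightarrow> b x \<le> b y"
    and zero: "\<And>x. x \<in> X \<Longrightarrow> a x = 0 \<longleftrightarrow> b x = 0"
    and b_range: "\<And>x. x \<in> X \<Longrightarrow> 0 \<le> b x \<and> b x < 1"
    and \<theta>: "0 < \<theta>" "\<theta> < 1"
  obtains \<theta>' where "0 < \<theta>'" "\<theta>' < 1"
    "\<And>x. x \<in> X \<Longrightarrow> a x < \<theta> \<longleftrightarrow> b x < \<theta>'" "\<And>x. x \<in> X \<Longrightarrow> a x = \<theta> \<longleftrightarrow> b x = \<theta>'"
proof (cases "\<exists>y\<in>X. a y = \<theta>")
  case True
  then obtain y where y: "y \<in> X" "a y = \<theta>" by blast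
  show ?thesis
  proof (rule that[of "b y"])
    show "0 < b y" "b y < 1"
      using b_range[OF y(1)] zero[OF y(1)] y(2) \<theta> by auto
  next
    fix x assume x: "x \<in> X"
    show "a x < \<theta> \<longleftrightarrow> b x < b y"
      using le[OF y(1) x] y(2) by linarith
    show "a x = \<theta> \<longleftrightarrow> b x = b y"
      using le[OF x y(1)] le[OF y(1) x] y(2) by linarith
  qed
next
  case False
  define L where "L = insert 0 {b x | x. x \<in> X \<and> a x < \<theta>}"
  define H where "H = insert 1 {b x | x. x \<in> X \<and> \<theta> < a x}"
  have "finite L" "finite H"
    unfolding L_def H_def using fin by auto
  have "p < q" if "p \<in> L" "q \<in> H" for p q
  proof -
    have "b x < b y" if "x \<in> X" "y \<in> X" "a x < \<theta>" "\<theta> < a y" for x y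
      using le[OF that(2,1)] that(3,4) by linarith
    moreover have "0 < b y" if "y \<in> X" "\<theta> < a y" for y
      using zero[OF that(1)] b_range[OF that(1)] \<theta> that(2) by fastforce
    ultimately show ?thesis
      using \<open>p \<in> L\<close> \<open>q \<in> H\<close> b_range unfolding L_def H_def by fastforce
  qed
  then have lo_hi: "Max L < Min H"
    using \<open>finite L\<close> \<open>finite H\<close> by (simp add: L_def H_def Max_less_iff Min_gr_iff)
  have lo: "0 \<le> Max L" and hi: "Min H \<le> 1"
    using \<open>finite L\<close> \<open>finite H\<close> unfolding L_def H_def by auto
  show ?thesis
  proof (rule that[of "(Max L + Min H) / 2"])
    show "0 < (Max L + Min H) / 2" "(Max L + Min H) / 2 < 1"
      using lo_hi lo hi by simp_all
  next
    fix x assume x: "x \<in> X"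
    have "a x \<noteq> \<theta>"
      using False x by blast
    have "b x \<le> Max L" if "a x < \<theta>"
      using \<open>finite L\<close> x that unfolding L_def by (intro Max_ge) auto
    moreover have "Min H \<le> b x" if "\<theta> < a x"
      using \<open>finite H\<close> x that unfolding H_def by (intro Min_le) auto
    ultimately have "a x < \<theta> \<and> b x \<le> Max L \<or> \<theta> < a x \<and> Min H \<le> b x"
      using \<open>a x \<noteq> \<theta>\<close> by (meson linorder_neqE_linordered_idom)
    then show "a x < \<theta> \<longleftrightarrow> b x < (Max L + Min H) / 2"
      and "a x = \<theta> \<longleftrightarrow> b x = (Max L + Min H) / 2"
      using lo_hi by auto
  qed
qed

lemma frac_delay_transfer:
  fixes a b :: "'x \<Rightarrow> real"
  assumes fin: "finite X"
    and le: "\<And>x y. x \<in> X \<Longrightarrow> y \<in> X \<Longrightarrow> a x \<le> a y \<longleftrightarrow> b x \<le> b y"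
    and zero: "\<And>x. x \<in> X \<Longrightarrow> a x = 0 \<longleftrightarrow> b x = 0"
    and a_range: "\<And>x. x \<in> X \<Longrightarrow> 0 \<le> a x \<and> a x < 1"
    and b_range: "\<And>x. x \<in> X \<Longrightarrow> 0 \<le> b x \<and> b x < 1"
    and f: "0 \<le> f" "f < 1"
  obtains e where "0 \<le> e" "e < 1" "f = 0 \<longleftrightarrow> e = 0"
    "\<And>x. x \<in> X \<Longrightarrow> a x + f < 1 \<longleftrightarrow> b x + e < 1"
    "\<And>x. x \<in> X \<Longrightarrow> a x + f = 1 \<longleftrightarrow> b x + e = 1"
proof (cases "f = 0")
  case True
  then show ?thesis
    using a_range b_range by (intro that[of 0]) fastforce+
next
  case False
  obtain \<theta>' where \<theta>': "0 < \<theta>'" "\<theta>' < 1"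
    "\<And>x. x \<in> X \<Longrightarrow> a x < 1 - f \<longleftrightarrow> b x < \<theta>'" "\<And>x. x \<in> X \<Longrightarrow> a x = 1 - f \<longleftrightarrow> b x = \<theta>'"
    by (rule order_cut_transfer[of X a b "1 - f"]) (use fin le zero b_range f False in auto)
  show ?thesis
  proof (rule that[of "1 - \<theta>'"])
    fix x assume x: "x \<in> X"
    show "a x + f < 1 \<longleftrightarrow> b x + (1 - \<theta>') < 1" "a x + f = 1 \<longleftrightarrow> b x + (1 - \<theta>') = 1"
      using \<theta>'(3)[OF x] \<theta>'(4)[OF x] by linarith+
  qed (use \<theta>' False in auto)
qed

lemma floor_add_diff_transfer:
  fixes x y d d' :: real
  assumes "\<lfloor>d\<rfloor> = \<lfloor>d'\<rfloor>" "frac x + frac d < 1 \<longleftrightarrow> frac y + frac d' < 1"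
  shows "\<lfloor>x + d\<rfloor> - \<lfloor>x\<rfloor> = \<lfloor>y + d'\<rfloor> - \<lfloor>y\<rfloor>"
  using assms by (simp add: floor_add)

lemma frac_add_eq_0_transfer:
  fixes x y d d' :: real
  assumes "frac x = 0 \<longleftrightarrow> frac y = 0" "frac d = 0 \<longleftrightarrow> frac d' = 0"
    "frac x + frac d < 1 \<longleftrightarrow> frac y + frac d' < 1" "frac x + frac d = 1 \<longleftrightarrow> frac y + frac d' = 1"
  shows "frac (x + d) = 0 \<longleftrightarrow> frac (y + d') = 0"
proof -
  have "frac z + frac e = 0 \<longleftrightarrow> frac z = 0 \<and> frac e = 0" for z e :: real
    using frac_ge_0[of z] frac_ge_0[of e] by linarith
  then show ?thesis
    using assms by (auto simp: frac_add simp del: frac_eq_0_iff)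
qed

lemma frac_add_le_transfer:
  fixes x1 x2 y1 y2 d d' :: real
  assumes "frac x1 \<le> frac x2 \<longleftrightarrow> frac y1 \<le> frac y2"
    "frac x1 + frac d < 1 \<longleftrightarrow> frac y1 + frac d' < 1" "frac x2 + frac d < 1 \<longleftrightarrow> frac y2 + frac d' < 1"
  shows "frac (x1 + d) \<le> frac (x2 + d) \<longleftrightarrow> frac (y1 + d') \<le> frac (y2 + d')"
proof -
  define a1 a2 b1 b2 f e where defs:
    "a1 = frac x1" "a2 = frac x2" "b1 = frac y1" "b2 = frac y2" "f = frac d" "e = frac d'"
  have "0 \<le> a1" "a1 < 1" "0 \<le> a2" "a2 < 1" "0 \<le> b1" "b1 < 1" "0 \<le> b2" "b2 < 1"
    "0 \<le> f" "f < 1" "0 \<le> e" "e < 1"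
    unfolding defs by (simp_all add: frac_lt_1)
  then show ?thesis
    using assms unfolding frac_add defs[symmetric]
    by (cases "a1 + f < 1"; cases "a2 + f < 1") auto
qed

lemma region_equiv_shift:
  assumes M: "max_const A \<in> \<nat>" and equiv: "region_equiv A u w" and d: "0 \<le> d" "0 \<le> d'"
    and floor_eq: "\<lfloor>d\<rfloor> = \<lfloor>d'\<rfloor>" and frac_eq_0: "frac d = 0 \<longleftrightarrow> frac d' = 0"
    and carry: "\<And>x. x \<in> region_clocks A \<Longrightarrow> frac (u x) + frac d < 1 \<longleftrightarrow> frac (w x) + frac d' < 1"
    and hit: "\<And>x. x \<in> region_clocks A \<Longrightarrow> frac (u x) + frac d = 1 \<longleftrightarrow> frac (w x) + frac d' = 1"
  shows "region_equiv A (\<lambda>x. u x + d) (\<lambda>x. w x + d')"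
proof (rule region_equivI)
  fix c assume c: "c \<in> clks A"
  then have Sc: "Some c \<in> region_clocks A" by simp
  have floor_diff: "\<lfloor>u (Some c) + d\<rfloor> - \<lfloor>u (Some c)\<rfloor> = \<lfloor>w (Some c) + d'\<rfloor> - \<lfloor>w (Some c)\<rfloor>"
    using floor_eq carry[OF Sc] by (rule floor_add_diff_transfer)
  show "u (Some c) + d > max_const A \<longleftrightarrow> w (Some c) + d' > max_const A"
  proof (cases "u (Some c) > max_const A")
    case True
    then show ?thesis
      using region_equiv_gt_max_const_iff[OF equiv c] d by auto
  next
    case False
    then have "\<lfloor>u (Some c) + d\<rfloor> = \<lfloor>w (Some c) + d'\<rfloor>"
      using region_equiv_floor_eq[OF equiv c] floor_diff by simp
    moreover have "frac (u (Some c) + d) = 0 \<longleftrightarrow> frac (w (Some c) + d') = 0"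
      using region_equiv_frac_eq_0_iff[OF equiv Sc] frac_eq_0 carry[OF Sc] hit[OF Sc]
      by (rule frac_add_eq_0_transfer)
    moreover obtain k :: nat where "max_const A = of_int (int k)"
      using M by (auto elim: Nats_cases)
    ultimately show ?thesis
      using cmp_sem_of_int_cong[of _ _ Gt "int k"] by (metis cmp_sem.simps(5))
  qed
  assume "u (Some c) + d \<le> max_const A"
  then have "\<lfloor>u (Some c)\<rfloor> = \<lfloor>w (Some c)\<rfloor>"
    using region_equiv_floor_eq[OF equiv c] d by simp
  then show "\<lfloor>u (Some c) + d\<rfloor> = \<lfloor>w (Some c) + d'\<rfloor>"
    using floor_diff by simp
next
  fix x assume x: "x \<in> region_clocks A"
  show "frac (u x + d) = 0 \<longleftrightarrow> frac (w x + d') = 0"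
    using region_equiv_frac_eq_0_iff[OF equiv x] frac_eq_0 carry[OF x] hit[OF x]
    by (rule frac_add_eq_0_transfer)
next
  fix x y assume x: "x \<in> region_clocks A" and y: "y \<in> region_clocks A"
  show "frac (u x + d) \<le> frac (u y + d) \<longleftrightarrow> frac (w x + d') \<le> frac (w y + d')"
    using region_equiv_frac_le_iff[OF equiv x y] carry[OF x] carry[OF y]
    by (rule frac_add_le_transfer)
qed

lemma region_equiv_delay:
  assumes fin: "finite (clks A)" and M: "max_const A \<in> \<nat>"
    and equiv: "region_equiv A u w" and d: "0 \<le> d"
  obtains d' where "0 \<le> d'" "region_equiv A (\<lambda>x. u x + d) (\<lambda>x. w x + d')"
    "\<lfloor>u None + d\<rfloor> - \<lfloor>u None\<rfloor> = \<lfloor>w None + d'\<rfloor> - \<lfloor>w None\<rfloor>"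
proof -
  obtain e where e: "0 \<le> e" "e < 1" "frac d = 0 \<longleftrightarrow> e = 0"
    and carry: "\<And>x. x \<in> region_clocks A \<Longrightarrow> frac (u x) + frac d < 1 \<longleftrightarrow> frac (w x) + e < 1"
    and hit: "\<And>x. x \<in> region_clocks A \<Longrightarrow> frac (u x) + frac d = 1 \<longleftrightarrow> frac (w x) + e = 1"
    by (rule frac_delay_transfer[of "region_clocks A" "\<lambda>x. frac (u x)" "\<lambda>x. frac (w x)" "frac d"])
      (use finite_region_clocks[OF fin] region_equiv_frac_le_iff[OF equiv]
        region_equiv_frac_eq_0_iff[OF equiv] frac_lt_1 in auto)
  define d' where "d' = of_int \<lfloor>d\<rfloor> + e"
  have d': "0 \<le> d'" "\<lfloor>d\<rfloor> = \<lfloor>d'\<rfloor>" "frac d' = e"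
    using d e unfolding d'_def by (simp_all add: floor_eq_iff)
  show ?thesis
  proof (rule that[OF d'(1)])
    show "region_equiv A (\<lambda>x. u x + d) (\<lambda>x. w x + d')"
      by (rule region_equiv_shift[OF M equiv d d'(1,2)])
        (use e(3) carry hit in \<open>simp_all add: d'(3)\<close>)
    show "\<lfloor>u None + d\<rfloor> - \<lfloor>u None\<rfloor> = \<lfloor>w None + d'\<rfloor> - \<lfloor>w None\<rfloor>"
      using d'(2) carry[OF None_in_region_clocks] unfolding d'(3)[symmetric]
      by (rule floor_add_diff_transfer)
  qed
qed

lemma edge_weight_realisable:
  assumes wf: "wf_ta A" and r: "r \<in> regions A" and r1: "r1 \<in> regions A"
    and v: "ext v T \<in> r" and n: "n \<in> edge_weights A q r a q1 r1"
  obtains d g R where "0 \<le> d" "(q, a, g, R, q1) \<in> trans A" "sat g (shift v d)"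
    "ext (reset R (shift v d)) (T + d) \<in> r1" "int n = \<lfloor>T + d\<rfloor> - \<lfloor>T\<rfloor>"
proof -
  from n obtain tr v0 T0 d0 g R where
    w: "ext v0 T0 \<in> r" "0 \<le> d0" "(q, a, g, R, q1) \<in> trans A" "sat g (shift v0 d0)"
      "ext (reset R (shift v0 d0)) (T0 + d0) \<in> r1" "int n = \<lfloor>T0 + d0\<rfloor> - \<lfloor>T0\<rfloor>"
    unfolding edge_weights_def by blast
  have fin: "finite (clks A)"
    using wf unfolding wf_ta_def by blast
  obtain d where d: "0 \<le> d" "region_equiv A (ext (shift v0 d0) (T0 + d0)) (ext (shift v d) (T + d))"
    "\<lfloor>T0 + d0\<rfloor> - \<lfloor>T0\<rfloor> = \<lfloor>T + d\<rfloor> - \<lfloor>T\<rfloor>"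
    using region_equiv_delay[OF fin max_const_in_Nats[OF wf]
        region_equiv_if_mem_region[OF r w(1) v] w(2)]
    unfolding ext_shift by auto
  have "sat g (shift v d)"
    by (rule sat_region_equiv[OF wf w(3) d(2) w(4)])
  moreover have "ext (reset R (shift v d)) (T + d) \<in> r1"
    using mem_region_if_region_equiv[OF r1 w(5) region_equiv_reset[OF d(2)]] .
  ultimately show ?thesis
    using that d(1,3) w(3,6) by simp
qed

section \<open>Time warps\<close>

lemma cmp_sem_of_int_add_sgn_cong:
  fixes s s' :: real
  assumes "\<bar>s\<bar> < 1" "\<bar>s'\<bar> < 1" "sgn s = sgn s'"
  shows "cmp_sem op (of_int L + s) (of_int k) \<longleftrightarrow> cmp_sem op (of_int L + s') (of_int k)"
proof -
  have sign: "s < 0 \<longleftrightarrow> s' < 0" "s = 0 \<longleftrightarrow> s' = 0"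
    using assms(3) by (metis sgn_less, metis sgn_0_0)
  consider "L \<le> k - 1" | "L = k" | "k + 1 \<le> L" by linarith
  then show ?thesis
  proof cases
    case 1
    then have "of_int L \<le> (of_int k :: real) - 1" by linarith
    then show ?thesis using assms(1,2) by (cases op) auto
  next
    case 2
    then show ?thesis using sign by (cases op) auto
  next
    case 3
    then have "(of_int k :: real) + 1 \<le> of_int L" by linarith
    then show ?thesis using assms(1,2) by (cases op) auto
  qed
qed

definition warp :: "(real \<Rightarrow> real) \<Rightarrow> real \<Rightarrow> real" where
  "warp \<phi> t = of_int \<lfloor>t\<rfloor> + \<phi> (frac t)"

locale time_warp =
  fixes \<phi> :: "real \<Rightarrow> real"
  assumes zero: "\<phi> 0 = 0"
    and strict_mono: "strict_mono_on {0..<1} \<phi>"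
    and range: "\<phi> ` {0..<1} \<subseteq> {0..<1}"
begin

lemma sgn_diff:
  assumes "x \<in> {0..<1}" "y \<in> {0..<1}"
  shows "sgn (\<phi> y - \<phi> x) = sgn (y - x)"
  using assms strict_mono_onD[OF strict_mono, of x y] strict_mono_onD[OF strict_mono, of y x]
  by (cases x y rule: linorder_cases) auto

lemma warp_diff_cmp_sem:
  "cmp_sem op (warp \<phi> b - warp \<phi> a) (of_int k) \<longleftrightarrow> cmp_sem op (b - a) (of_int k)"
proof -
  have fracs: "frac a \<in> {0..<1}" "frac b \<in> {0..<1}"
    by (simp_all add: frac_lt_1)
  then have "\<phi> (frac a) \<in> {0..<1}" "\<phi> (frac b) \<in> {0..<1}"
    using range by blast+
  then have "\<bar>\<phi> (frac b) - \<phi> (frac a)\<bar> < 1" "\<bar>frac b - frac a\<bar> < 1"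
    using fracs unfolding abs_less_iff atLeastLessThan_iff by linarith+
  then have "cmp_sem op (of_int (\<lfloor>b\<rfloor> - \<lfloor>a\<rfloor>) + (\<phi> (frac b) - \<phi> (frac a))) (of_int k) \<longleftrightarrow>
      cmp_sem op (of_int (\<lfloor>b\<rfloor> - \<lfloor>a\<rfloor>) + (frac b - frac a)) (of_int k)"
    using fracs sgn_diff by (intro cmp_sem_of_int_add_sgn_cong) simp_all
  moreover have "b - a = of_int (\<lfloor>b\<rfloor> - \<lfloor>a\<rfloor>) + (frac b - frac a)"
    unfolding frac_def by simp
  moreover have "warp \<phi> b - warp \<phi> a = of_int (\<lfloor>b\<rfloor> - \<lfloor>a\<rfloor>) + (\<phi> (frac b) - \<phi> (frac a))"
    unfolding warp_def by simp
  ultimately show ?thesis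
    by simp
qed

lemma warp_0: "warp \<phi> 0 = 0"
  unfolding warp_def using zero by simp

lemma warp_mono: "a \<le> b \<Longrightarrow> warp \<phi> a \<le> warp \<phi> b"
  using warp_diff_cmp_sem[of Ge b a 0] by simp

text \<open>A clock with value \<open>v c\<close> at time \<open>T\<close> was last reset at time \<open>T - v c\<close>; warping all
  time stamps, reset times included, preserves every integer guard.\<close>

lemma ta_run_warp:
  assumes int_guards: "\<forall>(q, a, g, R, q') \<in> trans A. \<forall>(c, op, n) \<in> set g. n \<in> \<int>"
  shows "ta_run A q v T tr q' v' T' \<Longrightarrow>
    ta_run A q (\<lambda>c. warp \<phi> T - warp \<phi> (T - v c)) (warp \<phi> T) (map (apfst (warp \<phi>)) tr)
      q' (\<lambda>c. warp \<phi> T' - warp \<phi> (T' - v' c)) (warp \<phi> T')"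
proof (induction rule: ta_run.induct)
  case (run_nil q v T)
  show ?case
    by (simp add: ta_run.run_nil)
next
  case (run_step d q a g R q1 v T tr q' v' T')
  let ?V = "\<lambda>c. warp \<phi> T - warp \<phi> (T - v c)"
  let ?d = "warp \<phi> (T + d) - warp \<phi> T"
  have "0 \<le> ?d"
    using warp_mono[of T "T + d"] run_step.hyps(1) by simp
  moreover have "sat g (shift ?V ?d)"
    unfolding sat_def
  proof (intro ballI, clarify)
    fix c op n assume cn: "(c, op, n) \<in> set g"
    obtain k where "n = of_int k"
      using int_guards run_step.hyps(2) cn by (fastforce elim: Ints_cases)
    moreover have "cmp_sem op (v c + d) n"
      using run_step.hyps(3) cn unfolding sat_def shift_def by auto
    ultimately show "cmp_sem op (shift ?V ?d c) n"
      using warp_diff_cmp_sem[of op "T + d" "T - v c"] unfolding shift_def by (simp add: ac_simps)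
  qed
  moreover have "reset R (shift ?V ?d) =
      (\<lambda>c. warp \<phi> (T + d) - warp \<phi> (T + d - reset R (shift v d) c))"
    unfolding reset_def shift_def by auto
  ultimately have "ta_run A q ?V (warp \<phi> T) ((warp \<phi> T + ?d, a) # map (apfst (warp \<phi>)) tr)
      q' (\<lambda>c. warp \<phi> T' - warp \<phi> (T' - v' c)) (warp \<phi> T')"
    using run_step.IH by (intro ta_run.run_step[OF _ run_step.hyps(2)]) simp_all
  then show ?case
    by simp
qed

end

definition squeeze :: "real \<Rightarrow> real \<Rightarrow> real" where
  "squeeze D f = (if f = 0 then 0 else D + (1/2 - D) * f)"

lemma time_warp_squeeze:
  assumes "0 \<le> D" "D < 1/2"
  shows "time_warp (squeeze D)"
proof
  show "squeeze D 0 = 0"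
    unfolding squeeze_def by simp
  show "strict_mono_on {0..<1} (squeeze D)"
  proof (rule strict_mono_onI)
    fix f g :: real assume "f \<in> {0..<1}" "g \<in> {0..<1}" "f < g"
    then have "(1/2 - D) * f < (1/2 - D) * g" "0 < (1/2 - D) * g"
      using assms by simp_all
    then show "squeeze D f < squeeze D g"
      using assms \<open>f < g\<close> unfolding squeeze_def by auto
  qed
  have "squeeze D f \<in> {0..<1}" if "f \<in> {0..<1}" for f
  proof -
    have "0 \<le> (1/2 - D) * f" "(1/2 - D) * f \<le> 1/2 - D"
      using that assms by (simp_all add: mult_left_le)
    moreover have "squeeze D f = 0 \<or> squeeze D f = D + (1/2 - D) * f"
      unfolding squeeze_def by simp
    ultimately show ?thesis
      using assms unfolding atLeastLessThan_iff by linarith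
  qed
  then show "squeeze D ` {0..<1} \<subseteq> {0..<1}"
    by blast
qed

definition disc_time :: "real \<Rightarrow> real" where
  "disc_time t = of_int \<lfloor>t\<rfloor> + of_int \<lceil>frac t\<rceil> / 2"

lemma disc_time_eq: "disc_time t = of_int \<lfloor>t\<rfloor> + (if frac t = 0 then 0 else 1/2)"
  unfolding disc_time_def ceiling_frac_eq by simp

lemma abs_diff_disc_time_le: "\<bar>t - disc_time t\<bar> \<le> 1/2"
proof (cases "frac t = 0")
  case True
  then show ?thesis
    unfolding disc_time_eq frac_def by simp
next
  case False
  have "0 \<le> t - of_int \<lfloor>t\<rfloor>" "t - of_int \<lfloor>t\<rfloor> < 1"
    using frac_ge_0[of t] frac_lt_1[of t] unfolding frac_def by simp_all
  then show ?thesis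
    using False unfolding disc_time_eq abs_le_iff by simp
qed

lemma disc_time_mono:
  assumes "a \<le> b"
  shows "disc_time a \<le> disc_time b"
proof (cases "\<lfloor>a\<rfloor> = \<lfloor>b\<rfloor>")
  case True
  then have "frac a \<le> frac b"
    using assms unfolding frac_def by simp
  then have "frac a \<noteq> 0 \<Longrightarrow> frac b \<noteq> 0"
    using frac_ge_0[of a] by linarith
  then show ?thesis
    using True unfolding disc_time_eq by (auto simp del: frac_eq_0_iff)
next
  case False
  then have "real_of_int \<lfloor>a\<rfloor> + 1 \<le> of_int \<lfloor>b\<rfloor>"
    using floor_mono[OF assms] by linarith
  then show ?thesis
    unfolding disc_time_eq by (simp del: frac_eq_0_iff)
qed

lemma disc_time_diff:
  assumes "r \<in> regions A" "ext v T \<in> r" "r' \<in> regions A" "ext v' T' \<in> r'"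
  shows "of_int (\<lfloor>T'\<rfloor> - \<lfloor>T\<rfloor>) + shift_delta r r' = disc_time T' - disc_time T"
  unfolding shift_delta_def frac_flag_eq[OF assms(1,2)] frac_flag_eq[OF assms(3,4)] disc_time_def
  by simp

lemma init_discretize: "init (discretize A) = (init A, region_of A (\<lambda>_. 0))"
  and acc_discretize: "acc (discretize A) = {(q, r). q \<in> acc A \<and> r \<in> regions A}"
  unfolding discretize_def by simp_all

lemma discretize_trans_weight:
  assumes "q \<in> locs A" "q' \<in> locs A" "r \<in> regions A" "r' \<in> regions A"
    "m \<in> edge_weights A q r a q' r'"
    "has_tail (edge_weights A q r a q' r') \<Longrightarrow> m < tail_start (edge_weights A q r a q' r')"
  shows "((q, r), a, [((), Eq, real m + shift_delta r r')], {()}, (q', r')) \<in> trans (discretize A)"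
  using assms unfolding discretize_def by auto

lemma discretize_trans_tail:
  assumes "q \<in> locs A" "q' \<in> locs A" "r \<in> regions A" "r' \<in> regions A"
    "has_tail (edge_weights A q r a q' r')"
  shows "((q, r), a, [((), Ge, real (tail_start (edge_weights A q r a q' r')) + shift_delta r r')],
      {()}, (q', r')) \<in> trans (discretize A)"
  using assms unfolding discretize_def by auto

lemma discretize_transE:
  assumes "((q, r), a, g, R, (q', r')) \<in> trans (discretize A)"
  obtains (weight) m where "g = [((), Eq, real m + shift_delta r r')]" "R = {()}" "r' \<in> regions A"
      "m \<in> edge_weights A q r a q' r'"
  | (tail) "g = [((), Ge, real (tail_start (edge_weights A q r a q' r')) + shift_delta r r')]"
      "R = {()}" "r' \<in> regions A" "has_tail (edge_weights A q r a q' r')"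
  using assms unfolding discretize_def by auto

lemma mem_tail:
  assumes "has_tail W" "tail_start W \<le> k"
  shows "k \<in> W"
proof -
  have "\<forall>k\<ge>tail_start W. k \<in> W"
    unfolding tail_start_def by (rule LeastI_ex) (use assms(1) in \<open>simp add: has_tail_def\<close>)
  then show ?thesis
    using assms(2) by blast
qed

lemma sat_unit_guard: "sat [((), op, n)] (shift (\<lambda>_. 0) d) \<longleftrightarrow> cmp_sem op d n"
  unfolding sat_def shift_def by simp

lemma reset_unit: "reset {()} (v :: unit \<Rightarrow> real) = (\<lambda>_. 0)"
  unfolding reset_def by auto

section \<open>Runs of the automaton followed by its discretization\<close>

lemma discretize_step:
  assumes wf: "wf_ta A" and reach: "ta_run A (init A) (\<lambda>_. 0) 0 pre q v T"
    and d: "0 \<le> d" and tr: "(q, a, g, R, q1) \<in> trans A" and sat: "sat g (shift v d)"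
  obtains g' where
    "((q, region_of A (ext v T)), a, g', {()},
        (q1, region_of A (ext (reset R (shift v d)) (T + d)))) \<in> trans (discretize A)"
    "sat g' (shift (\<lambda>_. 0) (disc_time (T + d) - disc_time T))"
proof -
  define r r1 where "r = region_of A (ext v T)"
    and "r1 = region_of A (ext (reset R (shift v d)) (T + d))"
  define W where "W = edge_weights A q r a q1 r1"
  define m where "m = nat (\<lfloor>T + d\<rfloor> - \<lfloor>T\<rfloor>)"
  have floor_le: "\<lfloor>T\<rfloor> \<le> \<lfloor>T + d\<rfloor>"
    using d by (intro floor_mono) simp
  have "int m = \<lfloor>T + d\<rfloor> - \<lfloor>T\<rfloor>"
    unfolding m_def using floor_le by simp
  then have "m \<in> W"
    unfolding W_def edge_weights_def r_def r1_def
    using reach d tr sat mem_region_of_self by blast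
  have locs: "q \<in> locs A" "q1 \<in> locs A"
    using wf_ta_trans_locs[OF wf tr] by auto
  have regs: "r \<in> regions A" "r1 \<in> regions A"
    unfolding r_def r1_def by (simp_all add: region_of_in_regions)
  have "ext v T \<in> r" "ext (reset R (shift v d)) (T + d) \<in> r1"
    unfolding r_def r1_def by (simp_all add: mem_region_of_self)
  then have delay: "real m + shift_delta r r1 = disc_time (T + d) - disc_time T"
    using disc_time_diff[OF regs(1) _ regs(2)] floor_le unfolding m_def by simp
  show ?thesis
  proof (cases "has_tail W \<and> tail_start W \<le> m")
    case True
    then show ?thesis
      using that discretize_trans_tail[OF locs regs] delay
      unfolding W_def r_def r1_def by (fastforce simp: sat_unit_guard)
  next
    case False
    then show ?thesis
      using that discretize_trans_weight[OF locs regs \<open>m \<in> W\<close>[unfolded W_def]] delay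
      unfolding W_def r_def r1_def by (fastforce simp: sat_unit_guard)
  qed
qed

lemma discretize_run:
  assumes wf: "wf_ta A"
  shows "ta_run A q v T tr q' v' T' \<Longrightarrow> ta_run A (init A) (\<lambda>_. 0) 0 pre q v T \<Longrightarrow>
    ta_run (discretize A) (q, region_of A (ext v T)) (\<lambda>_. 0) (disc_time T)
      (map (apfst disc_time) tr) (q', region_of A (ext v' T')) (\<lambda>_. 0) (disc_time T')"
proof (induction arbitrary: pre rule: ta_run.induct)
  case (run_nil q v T)
  show ?case
    by (simp add: ta_run.run_nil)
next
  case (run_step d q a g R q1 v T tr q' v' T')
  obtain g' where g':
    "((q, region_of A (ext v T)), a, g', {()},
        (q1, region_of A (ext (reset R (shift v d)) (T + d)))) \<in> trans (discretize A)"
    "sat g' (shift (\<lambda>_. 0) (disc_time (T + d) - disc_time T))"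
    using discretize_step[OF wf run_step.prems run_step.hyps(1-3)] by blast
  have "ta_run A (init A) (\<lambda>_. 0) 0 (pre @ [(T + d, a)]) q1 (reset R (shift v d)) (T + d)"
    using ta_run_append[OF run_step.prems ta_run_single[OF run_step.hyps(1-3)]] .
  note IH = run_step.IH[OF this]
  have "0 \<le> disc_time (T + d) - disc_time T"
    using disc_time_mono[of T "T + d"] run_step.hyps(1) by simp
  from ta_run.run_step[where T = "disc_time T", OF this g'] IH
  show ?case
    by (simp add: reset_unit)
qed

lemma conf_dist_lang_discretize_le:
  assumes wf: "wf_ta A"
  shows "conf_dist (lang A) (lang (discretize A)) \<le> ereal (1/2)"
proof (rule conf_dist_le)
  fix tr assume "tr \<in> lang A"
  then obtain q' v' T' where run: "ta_run A (init A) (\<lambda>_. 0) 0 tr q' v' T'" "q' \<in> acc A"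
    unfolding lang_def by blast
  have "map (apfst disc_time) tr \<in> lang (discretize A)"
    using discretize_run[OF wf run(1) ta_run.run_nil] run(2) region_of_in_regions
    unfolding lang_def init_discretize acc_discretize ext_0 by (fastforce simp: disc_time_def)
  moreover have "list_all2 (\<lambda>(s, a) (t, b). a = b \<and> \<bar>s - t\<bar> \<le> 1/2) tr (map (apfst disc_time) tr)"
    unfolding list.rel_map
    by (rule list_all2_refl) (use abs_diff_disc_time_le in \<open>auto split: prod.splits\<close>)
  then have "trace_dist tr (map (apfst disc_time) tr) \<le> ereal (1/2)"
    by (rule trace_dist_le_if_list_all2) simp
  ultimately show "\<exists>tr'\<in>lang (discretize A). trace_dist tr tr' \<le> ereal (1/2)"
    by blast
qed

section \<open>Runs of the discretization followed by the automaton\<close>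

lemma discretize_weight_choice:
  assumes tr: "((q, r), a, g, R, (q1, r1)) \<in> trans (discretize A)"
    and sat: "sat g (shift (\<lambda>_. 0) d)" and D: "-1/2 \<le> D" "D < 1/2"
  obtains n where "n \<in> edge_weights A q r a q1 r1"
    "-1/2 \<le> D + d - shift_delta r r1 - real n" "D + d - shift_delta r r1 - real n < 1/2"
  using tr
proof (cases rule: discretize_transE)
  case (weight m)
  then have "d = real m + shift_delta r r1"
    using sat by (simp add: sat_unit_guard)
  then show ?thesis
    using that[of m] weight(4) D by simp
next
  case tail
  define x where "x = D + d - shift_delta r r1"
  have tail_le: "real (tail_start (edge_weights A q r a q1 r1)) \<le> x + 1/2"
    using sat tail(1) D unfolding x_def by (simp add: sat_unit_guard)
  then have "0 \<le> \<lfloor>x + 1/2\<rfloor>"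
    using of_nat_0_le_iff zero_le_floor by (metis order_trans)
  then have n: "real (nat \<lfloor>x + 1/2\<rfloor>) = of_int \<lfloor>x + 1/2\<rfloor>"
    by simp
  have floor: "of_int \<lfloor>x + 1/2\<rfloor> \<le> x + 1/2" "x + 1/2 < of_int \<lfloor>x + 1/2\<rfloor> + 1"
    by linarith+
  show ?thesis
  proof (rule that[of "nat \<lfloor>x + 1/2\<rfloor>"])
    show "nat \<lfloor>x + 1/2\<rfloor> \<in> edge_weights A q r a q1 r1"
      using tail_le mem_tail[OF tail(4)] by (simp add: le_nat_iff le_floor_iff)
    show "-1/2 \<le> D + d - shift_delta r r1 - real (nat \<lfloor>x + 1/2\<rfloor>)"
      "D + d - shift_delta r r1 - real (nat \<lfloor>x + 1/2\<rfloor>) < 1/2"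
      using floor n unfolding x_def by linarith+
  qed
qed

lemma step_of_discretize_step:
  assumes wf: "wf_ta A" and tr: "((q, r), a, g, R, (q1, r1)) \<in> trans (discretize A)"
    and sat: "sat g (shift (\<lambda>_. 0) d)" and r: "r \<in> regions A" and v: "ext v T \<in> r"
    and D: "-1/2 \<le> S - disc_time T" "S - disc_time T < 1/2"
  obtains dA g' R' where "0 \<le> dA" "(q, a, g', R', q1) \<in> trans A" "sat g' (shift v dA)"
    "ext (reset R' (shift v dA)) (T + dA) \<in> r1"
    "-1/2 \<le> S + d - disc_time (T + dA)" "S + d - disc_time (T + dA) < 1/2"
proof -
  have r1: "r1 \<in> regions A"
    using tr by (cases rule: discretize_transE) auto
  obtain n where n: "n \<in> edge_weights A q r a q1 r1"
    "-1/2 \<le> S - disc_time T + d - shift_delta r r1 - real n"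
    "S - disc_time T + d - shift_delta r r1 - real n < 1/2"
    using discretize_weight_choice[OF tr sat D] by blast
  obtain dA g' R' where step: "0 \<le> dA" "(q, a, g', R', q1) \<in> trans A" "sat g' (shift v dA)"
    "ext (reset R' (shift v dA)) (T + dA) \<in> r1" "int n = \<lfloor>T + dA\<rfloor> - \<lfloor>T\<rfloor>"
    using edge_weight_realisable[OF wf r r1 v n(1)] by blast
  have "real n + shift_delta r r1 = disc_time (T + dA) - disc_time T"
    using disc_time_diff[OF r v r1 step(4)] step(5) by (metis of_int_of_nat_eq)
  then show ?thesis
    using that[OF step(1-4)] n(2,3) by simp
qed

definition near_disc_event :: "real \<times> 'a \<Rightarrow> real \<times> 'a \<Rightarrow> bool" where
  "near_disc_event = (\<lambda>(s, a) (t, b). a = b \<and> -1/2 \<le> s - disc_time t \<and> s - disc_time t < 1/2)"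

lemma run_of_discretize_run:
  assumes wf: "wf_ta A"
  shows "ta_run (discretize A) qr w S trD qr' w' S' \<Longrightarrow> qr = (q, r) \<Longrightarrow> w = (\<lambda>_. 0) \<Longrightarrow>
    r \<in> regions A \<Longrightarrow> ext v T \<in> r \<Longrightarrow> -1/2 \<le> S - disc_time T \<Longrightarrow> S - disc_time T < 1/2 \<Longrightarrow>
    \<exists>tr v' T'. ta_run A q v T tr (fst qr') v' T' \<and> list_all2 near_disc_event trD tr"
proof (induction arbitrary: q r v T rule: ta_run.induct)
  case (run_nil qr w S)
  then show ?case
    using ta_run.run_nil by fastforce
next
  case (run_step d qr a g R qr1 w S trD qr' w' S')
  obtain q1 r1 where qr1: "qr1 = (q1, r1)"
    by (cases qr1)
  have tr: "((q, r), a, g, R, (q1, r1)) \<in> trans (discretize A)"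
    using run_step.hyps(2) run_step.prems(1) qr1 by simp
  have sat: "sat g (shift (\<lambda>_. 0) d)"
    using run_step.hyps(3) run_step.prems(2) by simp
  obtain dA g' R' where step: "0 \<le> dA" "(q, a, g', R', q1) \<in> trans A" "sat g' (shift v dA)"
    "ext (reset R' (shift v dA)) (T + dA) \<in> r1"
    "-1/2 \<le> S + d - disc_time (T + dA)" "S + d - disc_time (T + dA) < 1/2"
    using step_of_discretize_step[OF wf tr sat run_step.prems(3-6)] by blast
  have reset: "reset R (shift w d) = (\<lambda>_. 0)"
    using tr by (cases rule: discretize_transE) (simp_all add: reset_unit)
  have r1: "r1 \<in> regions A"
    using tr by (cases rule: discretize_transE) simp_all
  obtain tr v' T' where IH: "ta_run A q1 (reset R' (shift v dA)) (T + dA) tr (fst qr') v' T'"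
    "list_all2 near_disc_event trD tr"
    using run_step.IH[OF qr1 reset r1 step(4-6)] by blast
  have "ta_run A q v T ((T + dA, a) # tr) (fst qr') v' T'"
    by (rule ta_run.run_step[OF step(1-3) IH(1)])
  moreover have "list_all2 near_disc_event ((S + d, a) # trD) ((T + dA, a) # tr)"
    using IH(2) step(5,6) by (simp add: near_disc_event_def)
  ultimately show ?case
    by blast
qed

lemma near_disc_event_uniform_bound:
  "list_all2 near_disc_event xs ys \<Longrightarrow> \<exists>D. 0 \<le> D \<and> D < 1/2 \<and>
     list_all2 (\<lambda>(s, a) (t, b). a = b \<and> -1/2 \<le> s - disc_time t \<and> s - disc_time t \<le> D) xs ys"
proof (induction rule: list_all2_induct)
  case Nil
  show ?case
    by auto
next
  case (Cons x xs y ys)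
  then obtain D where D: "0 \<le> D" "D < 1/2"
    "list_all2 (\<lambda>(s, a) (t, b). a = b \<and> -1/2 \<le> s - disc_time t \<and> s - disc_time t \<le> D) xs ys"
    by blast
  obtain s t a where xy: "x = (s, a)" "y = (t, a)" "-1/2 \<le> s - disc_time t" "s - disc_time t < 1/2"
    using Cons.hyps(1) unfolding near_disc_event_def by (cases x; cases y) auto
  define D' where "D' = max D (s - disc_time t)"
  have "list_all2 (\<lambda>(s, a) (t, b). a = b \<and> -1/2 \<le> s - disc_time t \<and> s - disc_time t \<le> D') xs ys"
    using D(3) by (rule list_all2_mono) (auto simp: D'_def)
  moreover have "0 \<le> D'" "D' < 1/2"
    unfolding D'_def le_max_iff_disj max_less_iff_conj using D(1,2) xy(4) by auto
  ultimately show ?case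
    using xy by (intro exI[of _ D']) (simp add: D'_def)
qed

lemma abs_diff_warp_squeeze_le:
  assumes "-1/2 \<le> s - disc_time t" "s - disc_time t \<le> D" "0 \<le> D" "D < 1/2"
  shows "\<bar>s - warp (squeeze D) t\<bar> \<le> 1/2"
proof (cases "frac t = 0")
  case True
  then have "warp (squeeze D) t = disc_time t"
    unfolding warp_def squeeze_def disc_time_eq by simp
  then show ?thesis
    using assms unfolding abs_le_iff by linarith
next
  case False
  have "0 < (1/2 - D) * frac t" "(1/2 - D) * frac t < 1/2 - D"
    using False assms(4) frac_ge_0[of t] frac_lt_1[of t] by (simp_all add: mult_less_cancel_left1)
  moreover have "warp (squeeze D) t = disc_time t - 1/2 + D + (1/2 - D) * frac t"
    using False unfolding warp_def squeeze_def disc_time_eq by simp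
  ultimately show ?thesis
    using assms unfolding abs_le_iff by linarith
qed

lemma conf_dist_discretize_lang_le:
  assumes wf: "wf_ta A"
  shows "conf_dist (lang (discretize A)) (lang A) \<le> ereal (1/2)"
proof (rule conf_dist_le)
  fix trD assume "trD \<in> lang (discretize A)"
  then obtain qr' w' S'
    where run: "ta_run (discretize A) (init A, region_of A (\<lambda>_. 0)) (\<lambda>_. 0) 0 trD qr' w' S'"
      and acc: "fst qr' \<in> acc A"
    unfolding lang_def init_discretize acc_discretize by auto
  obtain tr v' T' where tr: "ta_run A (init A) (\<lambda>_. 0) 0 tr (fst qr') v' T'"
    "list_all2 near_disc_event trD tr"
    using run_of_discretize_run[OF wf run refl refl region_of_in_regions, of "\<lambda>_. 0" 0]
    by (auto simp: ext_0 mem_region_of_self disc_time_def)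
  obtain D where D: "0 \<le> D" "D < 1/2"
    "list_all2 (\<lambda>(s, a) (t, b). a = b \<and> -1/2 \<le> s - disc_time t \<and> s - disc_time t \<le> D) trD tr"
    using near_disc_event_uniform_bound[OF tr(2)] by blast
  interpret time_warp "squeeze D"
    by (rule time_warp_squeeze[OF D(1,2)])
  have "\<forall>(q, a, g, R, q') \<in> trans A. \<forall>(c, op, n) \<in> set g. n \<in> \<int>"
    using wf_ta_guard(2)[OF wf] Nats_subset_Ints by fast
  from ta_run_warp[OF this tr(1)]
  have "map (apfst (warp (squeeze D))) tr \<in> lang A"
    using acc unfolding lang_def by (auto simp: warp_0)
  moreover have "list_all2 (\<lambda>(s, a) (t, b). a = b \<and> \<bar>s - t\<bar> \<le> 1/2)
      trD (map (apfst (warp (squeeze D))) tr)"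
    unfolding list.rel_map using D(3)
    by (rule list_all2_mono) (use abs_diff_warp_squeeze_le D(1,2) in \<open>auto split: prod.splits\<close>)
  then have "trace_dist trD (map (apfst (warp (squeeze D))) tr) \<le> ereal (1/2)"
    by (rule trace_dist_le_if_list_all2) simp
  ultimately show "\<exists>tr'\<in>lang A. trace_dist trD tr' \<le> ereal (1/2)"
    by blast
qed

theorem theorem2:
  fixes A :: "('q, 'a, 'c) ta"
  assumes "wf_ta A"
  shows "lang_dist (lang A) (lang (discretize A)) \<le> ereal (1/2)"
  using conf_dist_lang_discretize_le[OF assms] conf_dist_discretize_lang_le[OF assms]
  unfolding lang_dist_def by simp

end
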